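(* Let $X$ be a shift space over $\mathcal{A}$, $N\ge0$ and $C\subseteq\mathcal{A}$, and assume that $\mathcal{E}_X(v)$ is acyclic for every $v\in\mathcal{L}(X)$ with $|v|<N$. Then the following are equivalent: (1) for every $v\in\mathcal{L}(X)$ with $|v|<N$ and all $a,b\in E^L_X(v)\cap C$, the vertices $a^L$ and $b^L$ are connected in $\mathcal{E}_X(v)$ by a path avoiding all vertices $c^L$ with $c\notin C$; (2) for every $n\le N$, the subgraph of $G^L_n(X)$ induced by the vertices in $C$ is connected; (3) the subgraph of $G^L_N(X)$ induced by the vertices in $C$ is connected. Symmetrically, the following are equivalent: (1') for every $v\in\mathcal{L}(X)$ with $|v|<N$ and all $a,b\in E^R_X(v)\cap C$, $a^R$ and $b^R$ are connected in $\mathcal{E}_X(v)$ by a path avoiding all vertices $c^R$ with $c\notin C$; (2') for every $n\le N$ the subgraph of $G^R_n(X)$ induced by $C$ is connected; (3') the subgraph of $G^R_N(X)$ induced by $C$ is connected.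
   Context: $X\subseteq\mathcal{A}^{\mathbb{Z}}$ is a shift space over a finite alphabet $\mathcal{A}$ with language $\mathcal{L}(X)$, $\mathcal{L}_n(X)$ its words of length $n$. For $v\in\mathcal{L}(X)$, $E^L_X(v)=\{a:av\in\mathcal{L}(X)\}$, $E^R_X(v)=\{b:vb\in\mathcal{L}(X)\}$, and $\mathcal{E}_X(v)$ is the bipartite graph whose vertices are the disjoint union of $\{a^L:a\in E^L_X(v)\}$ and $\{b^R:b\in E^R_X(v)\}$, with an edge $\{a^L,b^R\}$ whenever $avb\in\mathcal{L}(X)$. $G^L_n(X)$ (resp. $G^R_n(X)$) is the multigraph with labeled edges whose vertex set is $\mathcal{A}$ and which has, for each $v\in\mathcal{L}_n(X)$ and each pair of distinct $a,b\in E^L_X(v)$ (resp. $a,b\in E^R_X(v)$), an undirected edge labeled $v$ between $a$ and $b$. *)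

theory Defs
  imports Main
begin

text \<open>Shift spaces over a finite alphabet: the alphabet is the finite type 'a
 (so the alphabet is UNIV); configurations are functions int => 'a; words are lists.\<close>

definition factor :: "(int \<Rightarrow> 'a) \<Rightarrow> int \<Rightarrow> nat \<Rightarrow> 'a list" where
  "factor x i n = map (\<lambda>k. x (i + int k)) [0..<n]"

text \<open>A shift space is the set of configurations avoiding a set of forbidden words
 (equivalently: a closed shift-invariant subset of the full shift).\<close>
definition shift_space :: "(int \<Rightarrow> 'a::finite) set \<Rightarrow> bool" where
  "shift_space X \<longleftrightarrow> (\<exists>F :: 'a list set. X = {x. \<forall>i n. factor x i n \<notin> F})"

definition lang :: "(int \<Rightarrow> 'a) set \<Rightarrow> 'a list set" where
  "lang X = {w. \<exists>x\<in>X. \<exists>i. w = factor x i (length w)}"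

definition EL :: "(int \<Rightarrow> 'a) set \<Rightarrow> 'a list \<Rightarrow> 'a set" where
  "EL X v = {a. a # v \<in> lang X}"

definition ER :: "(int \<Rightarrow> 'a) set \<Rightarrow> 'a list \<Rightarrow> 'a set" where
  "ER X v = {b. v @ [b] \<in> lang X}"

text \<open>Extension graph: left vertices a^L are Inl a, right vertices b^R are Inr b.\<close>
definition ext_vertices :: "(int \<Rightarrow> 'a) set \<Rightarrow> 'a list \<Rightarrow> ('a + 'a) set" where
  "ext_vertices X v = Inl ` EL X v \<union> Inr ` ER X v"

definition ext_edge :: "(int \<Rightarrow> 'a) set \<Rightarrow> 'a list \<Rightarrow> ('a + 'a) \<Rightarrow> ('a + 'a) \<Rightarrow> bool" where
  "ext_edge X v p q \<longleftrightarrow>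
     (\<exists>a b. a # v @ [b] \<in> lang X \<and> ((p = Inl a \<and> q = Inr b) \<or> (p = Inr b \<and> q = Inl a)))"

definition is_cycle :: "'v set \<Rightarrow> ('v \<Rightarrow> 'v \<Rightarrow> bool) \<Rightarrow> 'v list \<Rightarrow> bool" where
  "is_cycle V E xs \<longleftrightarrow> length xs \<ge> 3 \<and> distinct xs \<and> set xs \<subseteq> V \<and>
     (\<forall>i. Suc i < length xs \<longrightarrow> E (xs ! i) (xs ! Suc i)) \<and> E (last xs) (hd xs)"

definition acyclic_graph :: "'v set \<Rightarrow> ('v \<Rightarrow> 'v \<Rightarrow> bool) \<Rightarrow> bool" where
  "acyclic_graph V E \<longleftrightarrow> \<not> (\<exists>xs. is_cycle V E xs)"

definition connected_within :: "'v set \<Rightarrow> ('v \<Rightarrow> 'v \<Rightarrow> bool) \<Rightarrow> 'v \<Rightarrow> 'v \<Rightarrow> bool" where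
  "connected_within W E p q \<longleftrightarrow> p \<in> W \<and> (\<lambda>x y. x \<in> W \<and> y \<in> W \<and> E x y)\<^sup>*\<^sup>* p q"

text \<open>Labelled edge multisets of G^L_n(X) and G^R_n(X): a triple (v, a, b) is an edge
 labelled v between a and b.\<close>
definition GL_edges :: "(int \<Rightarrow> 'a) set \<Rightarrow> nat \<Rightarrow> ('a list \<times> 'a \<times> 'a) set" where
  "GL_edges X n = {(v, a, b). v \<in> lang X \<and> length v = n \<and> a \<in> EL X v \<and> b \<in> EL X v \<and> a \<noteq> b}"

definition GR_edges :: "(int \<Rightarrow> 'a) set \<Rightarrow> nat \<Rightarrow> ('a list \<times> 'a \<times> 'a) set" where
  "GR_edges X n = {(v, a, b). v \<in> lang X \<and> length v = n \<and> a \<in> ER X v \<and> b \<in> ER X v \<and> a \<noteq> b}"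

text \<open>The subgraph induced by C of a multigraph on vertex set UNIV with labelled edge set Ed
 is connected (the empty graph counts as connected).\<close>
definition induced_connected :: "('l \<times> 'v \<times> 'v) set \<Rightarrow> 'v set \<Rightarrow> bool" where
  "induced_connected Ed C \<longleftrightarrow>
     (\<forall>a\<in>C. \<forall>b\<in>C. (\<lambda>x y. x \<in> C \<and> y \<in> C \<and> (\<exists>l. (l, x, y) \<in> Ed \<or> (l, y, x) \<in> Ed))\<^sup>*\<^sup>* a b)"

end

theory Submission
  imports Defs "HOL-Library.Transitive_Closure_Table"
begin

text \<open>Call \<open>a, b \<in> C\<close> \<open>n\<close>-linked if they are left extensions of a common word of length
  \<open>n\<close>, the label of the link; conditions (2) and (3) say that \<open>n\<close>-links connect \<open>C\<close>. Dropping
  the last letter turns an \<open>(n + 1)\<close>-link into an \<open>n\<close>-link, whence (3) implies (2). A path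
  \<open>a\<^sup>L - g\<^sup>R - b\<^sup>L - \<dots>\<close> in the extension graph of \<open>w\<close> through left vertices in \<open>C\<close> is a
  chain of \<open>(|w| + 1)\<close>-links, so (1) implies (2) by induction on \<open>n\<close>.

  Conversely, acyclicity shows by induction on \<open>|v|\<close> that \<open>|v|\<close>-links not labelled \<open>v\<close> never
  connect two distinct left extensions \<open>x, y\<close> of \<open>v\<close> in \<open>C\<close>: for \<open>v = u f\<close>, such a chain
  would yield a path from \<open>x\<^sup>L\<close> to \<open>y\<^sup>L\<close> in the extension graph of \<open>u\<close> avoiding \<open>f\<^sup>R\<close>, closing
  a cycle with \<open>x\<^sup>L - f\<^sup>R - y\<^sup>L\<close>. Hence a chain of \<open>(|v| + 1)\<close>-links between left extensions
  of \<open>v\<close> passes from one of them to another only through links labelled \<open>v g\<close>, which are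
  paths \<open>c\<^sup>L - g\<^sup>R - c'\<^sup>L\<close> in the extension graph of \<open>v\<close>; this gives (1). The right-hand
  statements follow by reflecting \<open>X\<close>.\<close>

lemma length_factor [simp]: "length (factor x i n) = n"
  by (simp add: factor_def)

lemma factor_add: "factor x i (m + n) = factor x i m @ factor x (i + int m) n"
  by (rule nth_equalityI) (auto simp: factor_def nth_append algebra_simps)

lemma lang_appendD:
  assumes "u @ w \<in> lang X"
  shows "u \<in> lang X" "w \<in> lang X"
proof -
  from assms obtain x i where "x \<in> X"
    and "u @ w = factor x i (length u) @ factor x (i + int (length u)) (length w)"
    unfolding lang_def by (auto simp flip: factor_add)
  then have "u = factor x i (length u)" "w = factor x (i + int (length u)) (length w)"
    by simp_all
  with \<open>x \<in> X\<close> show "u \<in> lang X" "w \<in> lang X"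
    unfolding lang_def by blast+
qed

lemma factor_reflect: "factor (\<lambda>i. x (- i)) i n = rev (factor x (1 - i - int n) n)"
proof (rule nth_equalityI)
  fix k assume "k < length (factor (\<lambda>i. x (- i)) i n)"
  then have "k < n" by simp
  then show "factor (\<lambda>i. x (- i)) i n ! k = rev (factor x (1 - i - int n) n) ! k"
    by (simp add: factor_def rev_nth algebra_simps)
qed simp

lemma rtrancl_path_nth:
  assumes "rtrancl_path r x xs y" "Suc i < length (x # xs)"
  shows "r ((x # xs) ! i) ((x # xs) ! Suc i)"
  using assms
proof (induction arbitrary: i)
  case (step x y ys z)
  then show ?case by (cases i) auto
qed simp

lemma rtrancl_path_last: "rtrancl_path r x xs y \<Longrightarrow> last (x # xs) = y"
  by (induction rule: rtrancl_path.induct) auto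

lemma connected_within_mono:
  "connected_within W E p q \<Longrightarrow> W \<subseteq> W' \<Longrightarrow> connected_within W' E p q"
  unfolding connected_within_def by (auto elim: rtranclp_mono[THEN predicate2D, rotated])

lemma connected_within_step:
  "connected_within W E p q \<Longrightarrow> E q r \<Longrightarrow> r \<in> W \<Longrightarrow> connected_within W E p r"
  unfolding connected_within_def by (auto intro: rtranclp.rtrancl_into_rtrancl elim: rtranclp.cases)

lemma acyclic_graph_common_neighbour_separates:
  assumes "acyclic_graph V E" "z \<in> V" "E q z" "E z p" "p \<noteq> q"
  shows "\<not> connected_within (V - {z}) E p q"
proof
  let ?R = "\<lambda>a b. a \<in> V - {z} \<and> b \<in> V - {z} \<and> E a b"
  assume "connected_within (V - {z}) E p q"
  then have "p \<in> V - {z}" and "\<exists>ys. rtrancl_path ?R p ys q"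
    unfolding connected_within_def rtranclp_eq_rtrancl_path by blast+
  then obtain ys where "rtrancl_path ?R p ys q" by blast
  then obtain xs where path: "rtrancl_path ?R p xs q" and "distinct (p # xs)"
    by (rule rtrancl_path_distinct) blast
  have "xs \<noteq> []" using path \<open>p \<noteq> q\<close> by (auto elim: rtrancl_path.cases)
  have "set xs \<subseteq> V - {z}"
    using path by (induction rule: rtrancl_path.induct) auto
  have "is_cycle V E (z # p # xs)"
    unfolding is_cycle_def
  proof (intro conjI allI impI)
    show "3 \<le> length (z # p # xs)" using \<open>xs \<noteq> []\<close> by (simp add: Suc_le_eq)
    show "distinct (z # p # xs)"
      using \<open>distinct (p # xs)\<close> \<open>set xs \<subseteq> V - {z}\<close> \<open>p \<in> V - {z}\<close> by auto
    show "set (z # p # xs) \<subseteq> V"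
      using \<open>set xs \<subseteq> V - {z}\<close> \<open>p \<in> V - {z}\<close> \<open>z \<in> V\<close> by auto
    show "E (last (z # p # xs)) (hd (z # p # xs))"
      using rtrancl_path_last[OF path] \<open>E q z\<close> by simp
    fix i assume "Suc i < length (z # p # xs)"
    then show "E ((z # p # xs) ! i) ((z # p # xs) ! Suc i)"
      using \<open>E z p\<close> rtrancl_path_nth[OF path] by (cases i) auto
  qed
  with assms(1) show False unfolding acyclic_graph_def by blast
qed

lemma is_cycle_vimage:
  assumes "inj f"
  shows "is_cycle (f -` V) (\<lambda>p q. E (f p) (f q)) xs \<longleftrightarrow> is_cycle V E (map f xs)"
proof -
  have "last (map f xs) = f (last xs)" "hd (map f xs) = f (hd xs)" if "length xs \<ge> 3"
    using that by (simp_all add: last_map hd_map flip: length_greater_0_conv)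
  then show ?thesis
    using assms unfolding is_cycle_def by (auto simp: distinct_map inj_on_def)
qed

lemma acyclic_graph_vimage:
  "inj f \<Longrightarrow> acyclic_graph V E \<Longrightarrow> acyclic_graph (f -` V) (\<lambda>p q. E (f p) (f q))"
  unfolding acyclic_graph_def by (simp add: is_cycle_vimage)

lemma connected_within_vimage:
  assumes "connected_within (f -` W) (\<lambda>p q. E (f p) (f q)) p q"
  shows "connected_within W E (f p) (f q)"
proof -
  have "(\<lambda>a b. a \<in> W \<and> b \<in> W \<and> E a b)\<^sup>*\<^sup>* (f p') (f q')"
    if "(\<lambda>a b. a \<in> f -` W \<and> b \<in> f -` W \<and> E (f a) (f b))\<^sup>*\<^sup>* p' q'" for p' q'
    using that by (induction rule: rtranclp_induct) (auto intro: rtranclp.rtrancl_into_rtrancl)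
  then show ?thesis using assms unfolding connected_within_def by auto
qed

lemma EL_lang: "a \<in> EL X w \<Longrightarrow> w \<in> lang X"
  unfolding EL_def using lang_appendD(2)[of "[a]" w] by simp

lemma EL_ER_of_lang: "a # v @ [b] \<in> lang X \<Longrightarrow> a \<in> EL X v \<and> b \<in> ER X v"
  unfolding EL_def ER_def using lang_appendD[of "a # v" "[b]"] lang_appendD[of "[a]" "v @ [b]"]
  by simp

lemma ext_edge_iff:
  "ext_edge X v (Inl a) (Inr b) \<longleftrightarrow> a # v @ [b] \<in> lang X"
  "ext_edge X v (Inr b) (Inl a) \<longleftrightarrow> a # v @ [b] \<in> lang X"
  unfolding ext_edge_def by auto

lemma ext_vertices_iff:
  "Inl a \<in> ext_vertices X v \<longleftrightarrow> a \<in> EL X v"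
  "Inr b \<in> ext_vertices X v \<longleftrightarrow> b \<in> ER X v"
  unfolding ext_vertices_def by auto

text \<open>The \<open>n\<close>-links of the header with label outside \<open>S\<close>: adjacency in the subgraph of
  \<open>G\<^sup>L\<^sub>n(X)\<close> induced by \<open>C\<close> with the \<open>S\<close>-labelled edges deleted, plus loops.\<close>

definition GL_adj :: "(int \<Rightarrow> 'a) set \<Rightarrow> 'a set \<Rightarrow> nat \<Rightarrow> 'a list set \<Rightarrow> 'a \<Rightarrow> 'a \<Rightarrow> bool" where
  "GL_adj X C n S a b \<longleftrightarrow> a \<in> C \<and> b \<in> C \<and> (\<exists>w. length w = n \<and> w \<notin> S \<and> a \<in> EL X w \<and> b \<in> EL X w)"

lemma induced_connected_GL_iff:
  "induced_connected (GL_edges X n) C \<longleftrightarrow> (\<forall>a\<in>C. \<forall>b\<in>C. (GL_adj X C n {})\<^sup>*\<^sup>* a b)"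
proof -
  let ?G = "\<lambda>a b. a \<in> C \<and> b \<in> C \<and> (\<exists>l. (l, a, b) \<in> GL_edges X n \<or> (l, b, a) \<in> GL_edges X n)"
  have "(GL_adj X C n {})\<^sup>*\<^sup>* = ?G\<^sup>*\<^sup>*"
  proof (rule rtranclp_subset)
    show "?G \<le> GL_adj X C n {}" by (auto simp: GL_edges_def GL_adj_def)
    show "GL_adj X C n {} \<le> ?G\<^sup>*\<^sup>*"
    proof (intro predicate2I)
      fix a b assume "GL_adj X C n {} a b"
      then show "?G\<^sup>*\<^sup>* a b"
        by (cases "a = b") (auto simp: GL_edges_def GL_adj_def intro!: r_into_rtranclp dest: EL_lang)
    qed
  qed
  then show ?thesis unfolding induced_connected_def by simp
qed

lemma GL_adj_Suc_imp: "GL_adj X C (Suc n) S a b \<Longrightarrow> GL_adj X C n {} a b"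
proof -
  assume "GL_adj X C (Suc n) S a b"
  then obtain w g where "a \<in> C" "b \<in> C" "length w = n"
    and "a # w @ [g] \<in> lang X" "b # w @ [g] \<in> lang X"
    unfolding GL_adj_def EL_def by (auto simp: length_Suc_conv_rev)
  then show "GL_adj X C n {} a b"
    unfolding GL_adj_def by (blast dest: EL_ER_of_lang)
qed

lemma induced_connected_GL_antimono:
  assumes "induced_connected (GL_edges X m) C" "n \<le> m"
  shows "induced_connected (GL_edges X n) C"
proof -
  have "GL_adj X C (Suc k) {} \<le> GL_adj X C k {}" for k
    by (blast intro: predicate2I GL_adj_Suc_imp)
  then have down: "induced_connected (GL_edges X k) C" if "induced_connected (GL_edges X (Suc k)) C" for k
    using that unfolding induced_connected_GL_iff by (blast dest: rtranclp_mono[THEN predicate2D])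
  from \<open>n \<le> m\<close> show ?thesis
    by (induction rule: inc_induct) (use assms(1) down in auto)
qed

definition GL_separating :: "(int \<Rightarrow> 'a) set \<Rightarrow> 'a set \<Rightarrow> nat \<Rightarrow> bool" where
  "GL_separating X C n \<longleftrightarrow> (\<forall>v a b. length v = n \<longrightarrow> a \<in> EL X v \<inter> C \<longrightarrow> b \<in> EL X v \<inter> C \<longrightarrow>
      (GL_adj X C n {v})\<^sup>*\<^sup>* a b \<longrightarrow> a = b)"

lemma ext_connected_of_GL_path:
  assumes sep: "GL_separating X C n" and "length v = n"
    and x: "x \<in> EL X v \<inter> C" and y: "y \<in> EL X v \<inter> C"
    and path: "(GL_adj X C (Suc n) S)\<^sup>*\<^sup>* x y"
  shows "connected_within (ext_vertices X v - {Inl c |c. c \<notin> C} - {Inr g |g. v @ [g] \<in> S})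
           (ext_edge X v) (Inl x) (Inl y)"
proof -
  define W where "W = ext_vertices X v - {Inl c |c. c \<notin> C} - {Inr g |g. v @ [g] \<in> S}"
  define P where "P c \<longleftrightarrow> connected_within W (ext_edge X v) (Inl x) (Inl c)" for c
  \<comment> \<open>\<open>h c\<close>: some vertex satisfying \<open>P\<close> is reachable from \<open>c\<close> avoiding \<open>v\<close>-labelled edges.
    By separation \<open>h\<close> agrees with \<open>P\<close> on the left extensions of \<open>v\<close>, and \<open>h\<close> is invariant
    along \<open>(n + 1)\<close>-links: those labelled \<open>v g\<close> are detours through \<open>g\<^sup>R\<close>.\<close>
  define h where "h c \<longleftrightarrow> (\<exists>k \<in> EL X v \<inter> C. (GL_adj X C n {v})\<^sup>*\<^sup>* c k \<and> P k)" for c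
  have h_iff_P: "h c \<longleftrightarrow> P c" if "c \<in> EL X v \<inter> C" for c
    using that sep \<open>length v = n\<close> unfolding h_def GL_separating_def by blast
  have P_hop: "P c1 \<longleftrightarrow> P c2"
    if "c1 \<in> C" "c2 \<in> C" "c1 # v @ [g] \<in> lang X" "c2 # v @ [g] \<in> lang X" "v @ [g] \<notin> S" for c1 c2 g
  proof -
    have "Inl c1 \<in> W" "Inl c2 \<in> W" "Inr g \<in> W"
      using that by (auto simp: W_def ext_vertices_iff dest: EL_ER_of_lang)
    then show ?thesis
      using that unfolding P_def by (metis connected_within_step ext_edge_iff)
  qed
  have h_inv: "h c1 \<longleftrightarrow> h c2" if "GL_adj X C (Suc n) S c1 c2" for c1 c2
  proof -
    from that obtain w g where c: "c1 \<in> C" "c2 \<in> C" and "length w = n" "w @ [g] \<notin> S"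
      and l: "c1 # w @ [g] \<in> lang X" "c2 # w @ [g] \<in> lang X"
      unfolding GL_adj_def EL_def by (auto simp: length_Suc_conv_rev)
    show ?thesis
    proof (cases "w = v")
      case True
      with c l \<open>w @ [g] \<notin> S\<close> show ?thesis
        using P_hop h_iff_P by (metis IntI EL_ER_of_lang)
    next
      case False
      then have "GL_adj X C n {v} c1 c2" "GL_adj X C n {v} c2 c1"
        using c l \<open>length w = n\<close> unfolding GL_adj_def by (auto dest: EL_ER_of_lang)
      then show ?thesis unfolding h_def by (meson converse_rtranclp_into_rtranclp)
    qed
  qed
  have "h x \<longleftrightarrow> h y"
    using path by (induction rule: rtranclp_induct) (auto dest: h_inv)
  moreover have "P x" using x unfolding P_def connected_within_def W_def ext_vertices_def by auto
  ultimately show ?thesis using x y h_iff_P unfolding P_def W_def by blast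
qed

lemma GL_separating_0: "GL_separating X C 0"
proof -
  have "\<not> GL_adj X C 0 {[]} a b" for a b by (auto simp: GL_adj_def)
  then show ?thesis unfolding GL_separating_def by (blast elim: converse_rtranclpE)
qed

lemma GL_separating_Suc:
  assumes sep: "GL_separating X C n"
    and acyclic: "\<forall>v\<in>lang X. length v = n \<longrightarrow> acyclic_graph (ext_vertices X v) (ext_edge X v)"
  shows "GL_separating X C (Suc n)"
  unfolding GL_separating_def
proof (intro allI impI, rule ccontr)
  fix v' x y
  assume "length v' = Suc n" and x: "x \<in> EL X v' \<inter> C" and y: "y \<in> EL X v' \<inter> C"
    and path: "(GL_adj X C (Suc n) {v'})\<^sup>*\<^sup>* x y" and "x \<noteq> y"
  from \<open>length v' = Suc n\<close> obtain v f where v': "v' = v @ [f]" and "length v = n"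
    by (auto simp: length_Suc_conv_rev)
  have lx: "x # v @ [f] \<in> lang X" and ly: "y # v @ [f] \<in> lang X"
    using x y v' unfolding EL_def by auto
  have "x \<in> EL X v \<inter> C" "y \<in> EL X v \<inter> C" using lx ly x y by (auto dest: EL_ER_of_lang)
  from ext_connected_of_GL_path[OF sep \<open>length v = n\<close> this path]
  have "connected_within (ext_vertices X v - {Inr f}) (ext_edge X v) (Inl x) (Inl y)"
    unfolding v' by (rule connected_within_mono) auto
  moreover have "acyclic_graph (ext_vertices X v) (ext_edge X v)"
    using acyclic lx \<open>length v = n\<close> by (auto dest: EL_ER_of_lang intro: EL_lang)
  moreover have "Inr f \<in> ext_vertices X v"
    using lx by (auto simp: ext_vertices_iff dest: EL_ER_of_lang)
  moreover have "ext_edge X v (Inl y) (Inr f)" "ext_edge X v (Inr f) (Inl x)"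
    using lx ly by (simp_all add: ext_edge_iff)
  ultimately show False
    using acyclic_graph_common_neighbour_separates[of _ _ "Inr f" "Inl y" "Inl x"] \<open>x \<noteq> y\<close>
    by simp
qed

lemma GL_separating_upto:
  assumes "\<forall>v\<in>lang X. length v < N \<longrightarrow> acyclic_graph (ext_vertices X v) (ext_edge X v)" "n \<le> N"
  shows "GL_separating X C n"
  using assms(2)
proof (induction n)
  case 0
  show ?case by (rule GL_separating_0)
next
  case (Suc n)
  moreover have "\<forall>v\<in>lang X. length v = n \<longrightarrow> acyclic_graph (ext_vertices X v) (ext_edge X v)"
    using assms(1) \<open>Suc n \<le> N\<close> by auto
  ultimately show ?case by (simp add: GL_separating_Suc)
qed

lemma GL_path_of_ext_connected:
  assumes "connected_within (ext_vertices X w - {Inl c |c. c \<notin> C}) (ext_edge X w) (Inl a) (Inl b)"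
  shows "(GL_adj X C (Suc (length w)) {})\<^sup>*\<^sup>* a b"
proof -
  define W where "W = ext_vertices X w - {Inl c |c. c \<notin> C}"
  let ?R = "(GL_adj X C (Suc (length w)) {})\<^sup>*\<^sup>*"
  have "a \<in> C" using assms by (auto simp: connected_within_def)
  have "(\<forall>c. q = Inl c \<longrightarrow> ?R a c) \<and> (\<forall>g. q = Inr g \<longrightarrow> (\<exists>c \<in> C. c # w @ [g] \<in> lang X \<and> ?R a c))"
    if "(\<lambda>p q. p \<in> W \<and> q \<in> W \<and> ext_edge X w p q)\<^sup>*\<^sup>* (Inl a) q" for q
    using that
  proof (induction rule: rtranclp_induct)
    case (step q q')
    from step(2) obtain c g where e: "c # w @ [g] \<in> lang X" "q \<in> W" "q' \<in> W"
      "(q = Inl c \<and> q' = Inr g) \<or> (q = Inr g \<and> q' = Inl c)" unfolding ext_edge_def by blast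
    then consider "q = Inl c" "q' = Inr g" | "q = Inr g" "q' = Inl c" by blast
    then show ?case
    proof cases
      case 1
      with step.IH e W_def show ?thesis by auto
    next
      case 2
      with step.IH obtain c0 where c0: "c0 \<in> C" "c0 # w @ [g] \<in> lang X" "?R a c0" by auto
      have "c \<in> C" using e(3) 2 W_def by auto
      then have "GL_adj X C (Suc (length w)) {} c0 c"
        unfolding GL_adj_def EL_def using c0 e(1) by (intro conjI exI[of _ "w @ [g]"]) auto
      with c0 2 show ?thesis by (auto intro: rtranclp.rtrancl_into_rtrancl)
    qed
  qed simp
  then show ?thesis using assms unfolding connected_within_def W_def by blast
qed

lemma left_extension_theorem:
  assumes letters: "\<forall>a. [a] \<in> lang X"
    and acyclic: "\<forall>v\<in>lang X. length v < N \<longrightarrow> acyclic_graph (ext_vertices X v) (ext_edge X v)"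
  shows "((\<forall>v\<in>lang X. length v < N \<longrightarrow> (\<forall>a\<in>EL X v \<inter> C. \<forall>b\<in>EL X v \<inter> C.
              connected_within (ext_vertices X v - {Inl c |c. c \<notin> C}) (ext_edge X v) (Inl a) (Inl b)))
          \<longleftrightarrow> (\<forall>n\<le>N. induced_connected (GL_edges X n) C))
       \<and> ((\<forall>n\<le>N. induced_connected (GL_edges X n) C) \<longleftrightarrow> induced_connected (GL_edges X N) C)"
proof (intro conjI iffI)
  assume ext: "\<forall>v\<in>lang X. length v < N \<longrightarrow> (\<forall>a\<in>EL X v \<inter> C. \<forall>b\<in>EL X v \<inter> C.
              connected_within (ext_vertices X v - {Inl c |c. c \<notin> C}) (ext_edge X v) (Inl a) (Inl b))"
  have "\<forall>a\<in>C. \<forall>b\<in>C. (GL_adj X C n {})\<^sup>*\<^sup>* a b" if "n \<le> N" for n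
    using that
  proof (induction n)
    case 0
    then show ?case using letters by (auto simp: GL_adj_def EL_def)
  next
    case (Suc n)
    have link: "(GL_adj X C (Suc n) {})\<^sup>*\<^sup>* a b" if "GL_adj X C n {} a b" for a b
    proof -
      from that obtain w where a: "a \<in> EL X w \<inter> C" and b: "b \<in> EL X w \<inter> C" and "length w = n"
        unfolding GL_adj_def by blast
      moreover have "w \<in> lang X" using a by (blast intro: EL_lang)
      ultimately have "connected_within (ext_vertices X w - {Inl c |c. c \<notin> C}) (ext_edge X w) (Inl a) (Inl b)"
        using ext Suc.prems by simp
      from GL_path_of_ext_connected[OF this] show ?thesis using \<open>length w = n\<close> by simp
    qed
    have "(GL_adj X C (Suc n) {})\<^sup>*\<^sup>* a b" if "(GL_adj X C n {})\<^sup>*\<^sup>* a b" for a b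
      using that by (induction rule: rtranclp_induct) (auto dest: link intro: rtranclp_trans)
    moreover have "\<forall>a\<in>C. \<forall>b\<in>C. (GL_adj X C n {})\<^sup>*\<^sup>* a b" using Suc by simp
    ultimately show ?case by blast
  qed
  then show "\<forall>n\<le>N. induced_connected (GL_edges X n) C" by (simp add: induced_connected_GL_iff)
next
  assume connected: "\<forall>n\<le>N. induced_connected (GL_edges X n) C"
  show "\<forall>v\<in>lang X. length v < N \<longrightarrow> (\<forall>a\<in>EL X v \<inter> C. \<forall>b\<in>EL X v \<inter> C.
              connected_within (ext_vertices X v - {Inl c |c. c \<notin> C}) (ext_edge X v) (Inl a) (Inl b))"
  proof (intro ballI impI)
    fix v a b assume "length v < N" and a: "a \<in> EL X v \<inter> C" and b: "b \<in> EL X v \<inter> C"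
    have sep: "GL_separating X C (length v)"
      using GL_separating_upto[OF acyclic] \<open>length v < N\<close> by simp
    have path: "(GL_adj X C (Suc (length v)) {})\<^sup>*\<^sup>* a b"
      using connected \<open>length v < N\<close> a b by (simp add: induced_connected_GL_iff Suc_leI)
    from ext_connected_of_GL_path[OF sep refl a b path]
    show "connected_within (ext_vertices X v - {Inl c |c. c \<notin> C}) (ext_edge X v) (Inl a) (Inl b)"
      by simp
  qed
next
  assume "induced_connected (GL_edges X N) C"
  then show "\<forall>n\<le>N. induced_connected (GL_edges X n) C" by (blast intro: induced_connected_GL_antimono)
qed simp

fun swap_side :: "'a + 'a \<Rightarrow> 'a + 'a" where
  "swap_side (Inl a) = Inr a"
| "swap_side (Inr b) = Inl b"

lemma swap_side_swap_side [simp]: "swap_side (swap_side p) = p"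
  by (cases p) auto

lemma inj_swap_side: "inj swap_side"
  by (metis injI swap_side_swap_side)

lemma connected_within_swap_side_iff:
  "connected_within (swap_side -` W) (\<lambda>p q. E (swap_side p) (swap_side q)) p q
   \<longleftrightarrow> connected_within W E (swap_side p) (swap_side q)"
proof
  assume "connected_within W E (swap_side p) (swap_side q)"
  moreover have "swap_side -` swap_side -` W = W" by auto
  ultimately show "connected_within (swap_side -` W) (\<lambda>p q. E (swap_side p) (swap_side q)) p q"
    using connected_within_vimage[of swap_side "swap_side -` W" "\<lambda>p q. E (swap_side p) (swap_side q)"]
    by force
qed (rule connected_within_vimage)

text \<open>Reflecting configurations exchanges left and right extensions, which reduces
  the right-hand statements to the left-hand ones.\<close>

definition mirror :: "(int \<Rightarrow> 'a) set \<Rightarrow> (int \<Rightarrow> 'a) set" where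
  "mirror X = (\<lambda>x i. x (- i)) ` X"

lemma lang_mirror: "w \<in> lang (mirror X) \<longleftrightarrow> rev w \<in> lang X"
proof -
  have "w \<in> lang (mirror X) \<longleftrightarrow> (\<exists>x\<in>X. \<exists>i. w = factor (\<lambda>i. x (- i)) i (length w))"
    unfolding lang_def mirror_def by blast
  also have "\<dots> \<longleftrightarrow> (\<exists>x\<in>X. \<exists>i. rev w = factor x (1 - i - int (length w)) (length w))"
    by (simp add: factor_reflect rev_swap)
  also have "\<dots> \<longleftrightarrow> (\<exists>x\<in>X. \<exists>j. rev w = factor x j (length w))"
  proof
    assume "\<exists>x\<in>X. \<exists>j. rev w = factor x j (length w)"
    then obtain x j where "x \<in> X" "rev w = factor x j (length w)" by blast
    then show "\<exists>x\<in>X. \<exists>i. rev w = factor x (1 - i - int (length w)) (length w)"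
      by (intro bexI[of _ x] exI[of _ "1 - j - int (length w)"]) simp_all
  qed blast
  also have "\<dots> \<longleftrightarrow> rev w \<in> lang X"
    unfolding lang_def by simp
  finally show ?thesis .
qed

lemma EL_mirror: "EL (mirror X) v = ER X (rev v)"
  by (simp add: EL_def ER_def lang_mirror)

lemma ER_mirror: "ER (mirror X) v = EL X (rev v)"
  by (simp add: EL_def ER_def lang_mirror)

lemma ext_vertices_mirror: "ext_vertices (mirror X) v = swap_side -` ext_vertices X (rev v)"
  by (force simp: ext_vertices_def EL_mirror ER_mirror elim: swap_side.elims)

lemma ext_edge_mirror:
  "ext_edge (mirror X) v = (\<lambda>p q. ext_edge X (rev v) (swap_side p) (swap_side q))"
  by (force simp: fun_eq_iff ext_edge_def lang_mirror elim: swap_side.elims)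

lemma GL_edges_mirror: "GL_edges (mirror X) n = (\<lambda>(v, ab). (rev v, ab)) ` GR_edges X n"
  by (force simp: GL_edges_def GR_edges_def EL_mirror lang_mirror image_iff)

lemma induced_connected_relabel:
  "induced_connected ((\<lambda>(l, ab). (f l, ab)) ` Ed) C \<longleftrightarrow> induced_connected Ed C"
proof -
  have "(\<exists>l. (l, ab) \<in> (\<lambda>(l, ab). (f l, ab)) ` Ed) \<longleftrightarrow> (\<exists>l. (l, ab) \<in> Ed)" for ab
    by force
  then show ?thesis unfolding induced_connected_def by (simp add: ex_disj_distrib)
qed

lemma ball_lang_mirror: "(\<forall>v\<in>lang (mirror X). P v) \<longleftrightarrow> (\<forall>v\<in>lang X. P (rev v))"
  by (metis lang_mirror rev_rev_ident)

lemma connected_within_mirror_iff: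
  "connected_within (ext_vertices (mirror X) v - {Inl c |c. c \<notin> C}) (ext_edge (mirror X) v) (Inl a) (Inl b)
   \<longleftrightarrow> connected_within (ext_vertices X (rev v) - {Inr c |c. c \<notin> C}) (ext_edge X (rev v)) (Inr a) (Inr b)"
proof -
  have "ext_vertices (mirror X) v - {Inl c |c. c \<notin> C}
      = swap_side -` (ext_vertices X (rev v) - {Inr c |c. c \<notin> C})"
    by (auto simp: ext_vertices_mirror elim: swap_side.elims)
  then show ?thesis by (simp add: ext_edge_mirror connected_within_swap_side_iff)
qed

lemma right_extension_theorem:
  assumes letters: "\<forall>a. [a] \<in> lang X"
    and acyclic: "\<forall>v\<in>lang X. length v < N \<longrightarrow> acyclic_graph (ext_vertices X v) (ext_edge X v)"
  shows "((\<forall>v\<in>lang X. length v < N \<longrightarrow> (\<forall>a\<in>ER X v \<inter> C. \<forall>b\<in>ER X v \<inter> C.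
              connected_within (ext_vertices X v - {Inr c |c. c \<notin> C}) (ext_edge X v) (Inr a) (Inr b)))
          \<longleftrightarrow> (\<forall>n\<le>N. induced_connected (GR_edges X n) C))
       \<and> ((\<forall>n\<le>N. induced_connected (GR_edges X n) C) \<longleftrightarrow> induced_connected (GR_edges X N) C)"
proof -
  have "\<forall>a. [a] \<in> lang (mirror X)" using letters by (simp add: lang_mirror)
  moreover have "\<forall>v\<in>lang (mirror X). length v < N \<longrightarrow>
      acyclic_graph (ext_vertices (mirror X) v) (ext_edge (mirror X) v)"
    using acyclic
    by (simp add: ball_lang_mirror ext_vertices_mirror ext_edge_mirror acyclic_graph_vimage inj_swap_side)
  ultimately show ?thesis
    using left_extension_theorem[of "mirror X" N C]
    by (simp add: ball_lang_mirror EL_mirror connected_within_mirror_iff GL_edges_mirror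
        induced_connected_relabel)
qed

theorem mainTheorem6:
  fixes X :: "(int \<Rightarrow> 'a::finite) set" and N :: nat and C :: "'a set"
  assumes "shift_space X"
    and "\<forall>a. [a] \<in> lang X"
    and "\<forall>v\<in>lang X. length v < N \<longrightarrow> acyclic_graph (ext_vertices X v) (ext_edge X v)"
  shows "((\<forall>v\<in>lang X. length v < N \<longrightarrow> (\<forall>a\<in>EL X v \<inter> C. \<forall>b\<in>EL X v \<inter> C.
              connected_within (ext_vertices X v - {Inl c |c. c \<notin> C}) (ext_edge X v) (Inl a) (Inl b)))
          \<longleftrightarrow> (\<forall>n\<le>N. induced_connected (GL_edges X n) C))
       \<and> ((\<forall>n\<le>N. induced_connected (GL_edges X n) C) \<longleftrightarrow> induced_connected (GL_edges X N) C)
       \<and> ((\<forall>v\<in>lang X. length v < N \<longrightarrow> (\<forall>a\<in>ER X v \<inter> C. \<forall>b\<in>ER X v \<inter> C.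
              connected_within (ext_vertices X v - {Inr c |c. c \<notin> C}) (ext_edge X v) (Inr a) (Inr b)))
          \<longleftrightarrow> (\<forall>n\<le>N. induced_connected (GR_edges X n) C))
       \<and> ((\<forall>n\<le>N. induced_connected (GR_edges X n) C) \<longleftrightarrow> induced_connected (GR_edges X N) C)"
  using left_extension_theorem[OF assms(2,3), of C] right_extension_theorem[OF assms(2,3), of C]
  by (simp only: conj_assoc)

end
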